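(* Let $n=p\,q^{\alpha}$ with $\alpha\ge 1$ an integer and $p,q$ distinct primes such that $q\not\equiv 1\pmod 3$. If $n$ divides $\sigma_3(n)$, then $n$ is an even perfect number and $n\neq 28$.
   Context: $\sigma_3(n)=\sum_{d\mid n,\ d>0} d^3$. A positive integer $n$ is perfect if $\sum_{d\mid n,\ d>0} d=2n$. *)

theory Defs
  imports "HOL-Computational_Algebra.Primes"
begin

definition sigma3 :: "nat \<Rightarrow> nat" where
  "sigma3 n = (\<Sum>d | d dvd n \<and> d > 0. d ^ 3)"

definition perfect :: "nat \<Rightarrow> bool" where
  "perfect n \<longleftrightarrow> n > 0 \<and> (\<Sum>d | d dvd n \<and> d > 0. d) = 2 * n"

end

theory Submission
  imports Defs "HOL-Number_Theory.Number_Theory"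
begin

text \<open>
  By multiplicativity, sigma3 (p q^a) = (1 + p^3) S with S = 1 + q^3 + ... + q^(3a). Since
  S is prime to q and 1 + p^3 is prime to p, the hypothesis says exactly that q^a divides
  1 + p^3 and p divides S. For q = 2 (mod 3) cubing is injective modulo q, which upgrades the
  first condition to q^a | p + 1, say p + 1 = m q^a. As (q^3 - 1) S = x^3 - 1 with x = q^(a+1),
  the prime p divides x - 1 or x^2 + x + 1. In the first case p | q - m, which by size forces
  m = q, i.e. p = q^(a+1) - 1, and parity gives q = 2. In the second case a Vieta-type descent
  leaves only q = 2, p = 3. The cases p = 2 and q = 3 succumb to direct estimates. Thus n is
  Euclid's number 2^a (2^(a+1) - 1) with 2^(a+1) - 1 prime. Finally n = 28 would mean p = 7 | q^3 - 1,
  but then S = a + 1 (mod p), which is too small to be divisible by p.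
\<close>

section \<open>Cubes modulo a prime\<close>

lemma fermat_little_int:
  fixes p x :: int
  assumes "prime p"
  shows "[x ^ nat p = x] (mod p)"
proof (cases "p dvd x")
  case True
  have "nat p > 0" using prime_gt_0_int[OF assms] by simp
  then have "p dvd x ^ nat p" using True by (meson dvd_trans dvd_power)
  with True have "[x ^ nat p = 0] (mod p)" "[x = 0] (mod p)"
    by (simp_all add: cong_0_iff)
  then show ?thesis by (metis cong_sym cong_trans)
next
  case False
  define r where "r = nat (x mod p)"
  have p: "p = int (nat p)" "prime (nat p)" using assms prime_gt_0_int[OF assms] by auto
  have r: "int r = x mod p" using prime_gt_0_int[OF assms] by (simp add: r_def)
  have "\<not> nat p dvd r"
  proof
    assume "nat p dvd r"
    then have "p dvd x mod p" using p(1) r by (metis int_dvd_int_iff)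
    then show False using False by (simp add: dvd_mod_iff)
  qed
  then have "[r ^ (nat p - 1) * r = 1 * r] (mod nat p)"
    using fermat_theorem[OF p(2)] cong_scalar_right by blast
  then have "[r ^ nat p = r] (mod nat p)"
    using power_minus_mult[of "nat p" r] prime_gt_0_int[OF assms] by simp
  then have "[int r ^ nat p = int r] (mod p)"
    by (metis cong_int_iff of_nat_power p(1))
  moreover have "[x = int r] (mod p)" by (simp add: r cong_def)
  ultimately show ?thesis by (meson cong_pow cong_sym cong_trans)
qed

text \<open>Since 3 divides 2p - 1, Fermat's little theorem recovers z modulo p as a power of z^3.\<close>
lemma cube_cong_imp_cong:
  fixes p x y :: int
  assumes "prime p" "p mod 3 = 2" "[x ^ 3 = y ^ 3] (mod p)"
  shows "[x = y] (mod p)"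
proof -
  have "p = 3 * (p div 3) + 2" "p div 3 \<ge> 0"
    using assms(2) prime_gt_0_int[OF assms(1)] by presburger+
  then have "nat p = 3 * nat (p div 3) + 2" by linarith
  then obtain k where k: "2 * nat p - 1 = 3 * k" by (intro that[of "2 * nat (p div 3) + 1"]) simp
  have odd_power: "[z ^ (2 * nat p - 1) = z] (mod p)" for z :: int
  proof -
    have "2 * nat p - 1 = nat p + (nat p - 1)"
      using prime_gt_0_int[OF assms(1)] by simp
    then have "z ^ (2 * nat p - 1) = z ^ nat p * z ^ (nat p - 1)"
      by (simp add: power_add)
    also have "[\<dots> = z * z ^ (nat p - 1)] (mod p)"
      using fermat_little_int[OF assms(1)] by (rule cong_scalar_right)
    also have "z * z ^ (nat p - 1) = z ^ nat p"
      using prime_gt_0_int[OF assms(1)] by (simp flip: power_Suc)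
    also have "[\<dots> = z] (mod p)" by (rule fermat_little_int[OF assms(1)])
    finally show ?thesis .
  qed
  have "[x = x ^ (2 * nat p - 1)] (mod p)" using odd_power by (rule cong_sym)
  also have "x ^ (2 * nat p - 1) = (x ^ 3) ^ k" by (simp only: k power_mult)
  also have "[\<dots> = (y ^ 3) ^ k] (mod p)" using assms(3) by (rule cong_pow)
  also have "(y ^ 3) ^ k = y ^ (2 * nat p - 1)" by (simp only: k power_mult)
  also have "[\<dots> = y] (mod p)" by (rule odd_power)
  finally show ?thesis .
qed

lemma not_dvd_cyclotomic3_of_mod3_eq2:
  fixes p x :: int
  assumes "prime p" "p mod 3 = 2"
  shows "\<not> p dvd x\<^sup>2 + x + 1"
proof
  assume dvd: "p dvd x\<^sup>2 + x + 1"
  have "x ^ 3 - 1 ^ 3 = (x - 1) * (x\<^sup>2 + x + 1)"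
    by (simp add: algebra_simps power2_eq_square power3_eq_cube)
  with dvd have "[x ^ 3 = 1 ^ 3] (mod p)" by (simp add: cong_iff_dvd_diff)
  then have "[x = 1] (mod p)" using assms by (rule cube_cong_imp_cong[rotated 2])
  then have "[x\<^sup>2 + x + 1 = 1\<^sup>2 + 1 + 1] (mod p)" by (intro cong_add cong_pow) auto
  with dvd have "p dvd 3" by (simp add: cong_dvd_iff)
  then have "p = 3" using assms(1) by (simp add: primes_dvd_imp_eq)
  with assms(2) show False by simp
qed

lemma prime_power_dvd_succ_of_dvd_cube_succ:
  fixes p q :: int
  assumes "prime q" "q mod 3 = 2" "q ^ a dvd 1 + p ^ 3"
  shows "q ^ a dvd p + 1"
proof -
  have factor: "1 + p ^ 3 = (p + 1) * (p\<^sup>2 - p + 1)"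
    by (simp add: algebra_simps power2_eq_square power3_eq_cube)
  have "\<not> q dvd p\<^sup>2 - p + 1"
  proof
    assume dvd: "q dvd p\<^sup>2 - p + 1"
    then have "q dvd 1 + p ^ 3" by (simp add: factor)
    then have "[p ^ 3 = (-1) ^ 3] (mod q)" by (simp add: cong_iff_dvd_diff add.commute)
    then have "[p = -1] (mod q)" using assms(1,2) by (rule cube_cong_imp_cong[rotated 2])
    then have "[p\<^sup>2 - p + 1 = (-1)\<^sup>2 - (-1) + 1] (mod q)" by (intro cong_add cong_diff cong_pow) auto
    with dvd have "q dvd 3" by (simp add: cong_dvd_iff)
    then have "q = 3" using assms(1) by (simp add: primes_dvd_imp_eq)
    with assms(2) show False by simp
  qed
  then have "coprime (q ^ a) (p\<^sup>2 - p + 1)" using assms(1) by (simp add: prime_imp_coprime)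
  with assms(3) factor show ?thesis by (metis coprime_dvd_mult_left_iff)
qed

lemma three_dvd_cube_succ_iff:
  fixes p :: int
  shows "3 dvd 1 + p ^ 3 \<longleftrightarrow> 3 dvd 1 + p"
proof -
  have "[1 + p ^ 3 = 1 + p] (mod 3)"
    using fermat_little_int[of 3 p] by (intro cong_add) simp_all
  then show ?thesis by (rule cong_dvd_iff)
qed

lemma three_power_dvd_succ_of_dvd_cube_succ:
  fixes p :: int
  assumes "3 ^ Suc a dvd 1 + p ^ 3"
  shows "3 ^ a dvd p + 1"
proof -
  have "3 dvd 1 + p ^ 3" using assms by (simp add: dvd_mult_left)
  then obtain u where u: "p = 3 * u - 1"
    by (metis add.commute three_dvd_cube_succ_iff dvdE add_diff_cancel_right')
  define w where "w = 3 * u\<^sup>2 - 3 * u + 1"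
  have "1 + p ^ 3 = 3 * ((p + 1) * w)"
    unfolding u w_def by (simp add: algebra_simps power2_eq_square power3_eq_cube)
  with assms have "3 ^ a dvd (p + 1) * w" by simp
  moreover have "coprime (3 ^ a) w"
  proof -
    have "\<not> 3 dvd w" unfolding w_def by presburger
    then show ?thesis by (simp add: prime_imp_coprime)
  qed
  ultimately show ?thesis by (simp add: coprime_dvd_mult_left_iff)
qed

lemma geometric_sum_cubes_factor:
  fixes q :: "'a::comm_ring_1"
  shows "(q ^ 3 - 1) * (\<Sum>i\<le>a. (q ^ 3) ^ i) = (q ^ (a + 1) - 1) * ((q ^ (a + 1))\<^sup>2 + q ^ (a + 1) + 1)"
proof -
  have "(q ^ 3 - 1) * (\<Sum>i\<le>a. (q ^ 3) ^ i) = (q ^ 3) ^ (a + 1) - 1"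
    using power_diff_1_eq[of "q ^ 3" "a + 1"] by (simp add: lessThan_Suc_atMost)
  also have "(q ^ 3) ^ (a + 1) = (q ^ (a + 1)) ^ 3" by (metis power_mult mult.commute)
  finally show ?thesis by (simp add: algebra_simps power2_eq_square power3_eq_cube)
qed

lemma prime_dvd_geometric_sum_cubes:
  fixes p q :: int
  assumes "prime p" "p dvd (\<Sum>i\<le>a. (q ^ 3) ^ i)"
  shows "p dvd q ^ (a + 1) - 1 \<or> p dvd (q ^ (a + 1))\<^sup>2 + q ^ (a + 1) + 1"
  using assms geometric_sum_cubes_factor[of q a]
  by (metis prime_dvd_mult_iff)

lemma geometric_sum_cong:
  fixes p r :: int
  assumes "[r = 1] (mod p)"
  shows "[(\<Sum>i\<le>a. r ^ i) = int a + 1] (mod p)"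
proof -
  have "[(\<Sum>i\<le>a. r ^ i) = (\<Sum>i\<le>a. 1 ^ i)] (mod p)"
    using assms by (intro cong_sum cong_pow)
  then show ?thesis by (simp add: add.commute)
qed

section \<open>Elementary Diophantine bounds\<close>

lemma eq_or_le_of_dvd_diff:
  fixes p m y z :: int
  assumes "p + 1 = m * y" "p dvd z - m" "p > 0" "y \<ge> 1" "z \<ge> 2"
  shows "m = z \<or> m * (y + 1) \<le> z + 1"
proof (cases "m = z")
  case False
  have "m * y > 0" using assms(1,3) by linarith
  then have "m > 0" using assms(4) by (simp add: zero_less_mult_iff)
  then have my: "m * y \<ge> m" using assms(4) by simp
  have "m * (y + 1) \<le> z + 1"
  proof (cases "m < z")
    case True
    then have "p \<le> z - m" using assms(2) by (simp add: zdvd_imp_le)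
    then show ?thesis using assms(1) by (simp add: algebra_simps)
  next
    case False
    with \<open>m \<noteq> z\<close> have "m - z > 0" by simp
    moreover have "p dvd m - z" using assms(2) by (metis dvd_minus_iff minus_diff_eq)
    ultimately have "p \<le> m - z" by (simp add: zdvd_imp_le)
    with assms(1,5) my show ?thesis by linarith
  qed
  then show ?thesis ..
qed simp

lemma le_of_mult_pred_dvd:
  fixes a b :: int
  assumes "a \<ge> 2" "a * b - 1 dvd a\<^sup>2 - a + 1"
  shows "b \<le> a"
proof (rule ccontr)
  assume "\<not> b \<le> a"
  then have "a * b \<ge> a * (a + 1)" using assms(1) by (intro mult_left_mono) auto
  moreover have "a\<^sup>2 - a + 1 > 0" using assms(1) by (simp add: power2_eq_square)
  then have "a * b - 1 \<le> a\<^sup>2 - a + 1" using assms(2) by (simp add: zdvd_imp_le)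
  ultimately show False using assms(1) by (simp add: power2_eq_square algebra_simps)
qed

text \<open>As m q = 1 (mod p), p also divides m^2 - m + 1, so the bound of \<open>le_of_mult_pred_dvd\<close> applies in both directions.\<close>
lemma prime_mult_pred_dvd_cyclotomic6:
  fixes p q m :: int
  assumes "prime p" "p = m * q - 1" "q \<ge> 2" "p dvd q\<^sup>2 - q + 1"
  shows "q = 2 \<and> p = 3"
proof -
  have "m\<^sup>2 - m + 1 = m\<^sup>2 * (q\<^sup>2 - q + 1) - p * (p + 2 - m)"
    by (simp add: assms(2) algebra_simps power2_eq_square)
  then have dvd_m: "p dvd m\<^sup>2 - m + 1"
    by (metis dvd_diff dvd_mult assms(4) dvd_triv_left)
  have "p > 1" using assms(1) by (simp add: prime_gt_1_int)
  then have "m * q > 0" using assms(2) by simp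
  then have "m \<ge> 1" using assms(3) by (simp add: zero_less_mult_iff)
  moreover have "m \<noteq> 1"
  proof
    assume "m = 1"
    then have "p dvd 1" using dvd_m by simp
    then show False using assms(1) by (simp add: not_prime_unit)
  qed
  ultimately have "m \<ge> 2" by simp
  have "m = q"
    using le_of_mult_pred_dvd[of q m] le_of_mult_pred_dvd[of m q] \<open>m \<ge> 2\<close> assms(2-4) dvd_m
    by (simp add: mult.commute)
  then have p: "p = (q - 1) * (q + 1)" using assms(2) by (simp add: algebra_simps)
  then have "q - 1 dvd p" by simp
  moreover have "q - 1 \<ge> 0" using assms(3) by simp
  ultimately have "q - 1 = 1 \<or> q - 1 = p" using assms(1) unfolding prime_int_iff by blast
  moreover have "q - 1 \<noteq> p"
  proof
    assume "q - 1 = p"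
    then have "(q - 1) * (q + 1) = (q - 1) * 1" using p by simp
    then show False using assms(3) by (subst (asm) mult_left_cancel) auto
  qed
  ultimately show ?thesis using p by auto
qed

lemma mult_pred_prime_power_eq_cyclotomic3:
  fixes q t :: int and a :: nat
  assumes "q \<ge> 2" "a \<ge> 2" "t \<ge> 1" "t * (q ^ a - 1) = q\<^sup>2 + q + 1"
  shows "q = 2 \<and> a = 3 \<and> t = 1"
proof (cases "a = 2")
  case True
  then have "q\<^sup>2 + q + 1 = (q + 1) * (t * (q - 1))"
    using assms(4) by (simp add: algebra_simps power2_eq_square)
  then have "q + 1 dvd (q\<^sup>2 + q + 1) - q * (q + 1)" by (metis dvd_diff dvd_triv_left dvd_triv_right)
  then have "q + 1 dvd 1" by (simp add: algebra_simps power2_eq_square)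
  with assms(1) show ?thesis by (simp add: zdvd_imp_le)
next
  case False
  then have "a \<ge> 3" using assms(2) by simp
  then have cube_le: "q ^ 3 \<le> q ^ a" using assms(1) by (intro power_increasing) auto
  have "1 * (q ^ a - 1) \<le> t * (q ^ a - 1)"
    using assms(1,3) by (intro mult_right_mono) (auto simp: one_le_power)
  then have bound: "q ^ a \<le> q\<^sup>2 + q + 2" using assms(4) by simp
  have "q = 2"
  proof (rule ccontr)
    assume "q \<noteq> 2"
    then have "q \<ge> 3" using assms(1) by simp
    then have "3 * q\<^sup>2 \<le> q * q\<^sup>2" "3 * q \<le> q * q"
      by (intro mult_right_mono; simp)+
    moreover have "q * q\<^sup>2 = q ^ 3" "q * q = q\<^sup>2" by (simp_all add: power3_eq_cube power2_eq_square)
    ultimately show False using bound cube_le \<open>q \<ge> 3\<close> by linarith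
  qed
  with bound have "(2::int) ^ a \<le> 2 ^ 3" by simp
  then have "a = 3" using \<open>a \<ge> 3\<close> power_le_imp_le_exp[of "2::int" a 3] by simp
  with assms(4) \<open>q = 2\<close> show ?thesis by simp
qed

lemma cyclotomic3_cofactor_relation:
  fixes p q m y k :: int
  assumes "p + 1 = m * y" "(q * y)\<^sup>2 + q * y + 1 = p * k" "y \<noteq> 0"
  obtains j where "k + 1 = y * j" "(j * m - q\<^sup>2) * y = q + j + m"
proof
  define j where "j = k * m - q\<^sup>2 * y - q"
  have p: "p = m * y - 1" using assms(1) by simp
  show kj: "k + 1 = y * j"
    using assms(2) unfolding j_def p by (simp add: algebra_simps power2_eq_square)
  then have "k = y * j - 1" by simp
  with assms(2) have "(q * y)\<^sup>2 + q * y + 1 = (m * y - 1) * (y * j - 1)"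
    by (simp add: p mult.commute)
  moreover have "y * ((j * m - q\<^sup>2) * y) - y * (q + j + m)
      = (m * y - 1) * (y * j - 1) - ((q * y)\<^sup>2 + q * y + 1)"
    by (simp add: algebra_simps power2_eq_square)
  ultimately have "y * ((j * m - q\<^sup>2) * y) = y * (q + j + m)" by simp
  with assms(3) show "(j * m - q\<^sup>2) * y = q + j + m" by simp
qed

text \<open>
  Vieta-type descent: with (q y)^2 + q y + 1 = p k and p + 1 = m y, the cofactors j = (k + 1) / y
  and m satisfy the relation (j m - q^2) y = q + j + m, which is symmetric in j and m and
  leaves room only for j = 1, m = 1, or q = 2 and y = 4.
\<close>
lemma prime_power_cofactor_dvd_cyclotomic3:
  fixes p q m :: int and a :: nat
  assumes "q \<ge> 2" "q \<noteq> 3" "a \<ge> 2" "p > 0" "p + 1 = m * q ^ a"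
    and "p dvd (q ^ (a + 1))\<^sup>2 + q ^ (a + 1) + 1"
  shows "q = 2 \<and> a = 3 \<and> (p = 7 \<or> p = 39)"
proof -
  define y where "y = q ^ a"
  have "q\<^sup>2 \<le> y" unfolding y_def using assms(1,3) by (intro power_increasing) auto
  then have "y > 0" using assms(1) by (smt (verit) zero_less_power2)
  have "p dvd (q * y)\<^sup>2 + q * y + 1" using assms(6) by (simp add: y_def)
  then obtain k where k: "(q * y)\<^sup>2 + q * y + 1 = p * k" by (elim dvdE)
  obtain j where kj: "k + 1 = y * j" and ty: "(j * m - q\<^sup>2) * y = q + j + m"
    using cyclotomic3_cofactor_relation[OF assms(5)[folded y_def] k] \<open>y > 0\<close> by auto
  have "(q * y)\<^sup>2 + q * y + 1 > 0" using assms(1) \<open>y > 0\<close> by (simp add: add_pos_nonneg)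
  then have "k > 0" using k assms(4) by (simp add: zero_less_mult_iff)
  then have "j \<ge> 1" using kj \<open>y > 0\<close> by (smt (verit) zero_less_mult_iff)
  have "m \<ge> 1" using assms(4,5) \<open>y > 0\<close> unfolding y_def by (smt (verit) zero_less_mult_iff)
  define t where "t = j * m - q\<^sup>2"
  have "t \<ge> 1" using ty \<open>y > 0\<close> \<open>j \<ge> 1\<close> \<open>m \<ge> 1\<close> assms(1) unfolding t_def
    by (smt (verit) zero_less_mult_iff)
  consider "j = 1 \<or> m = 1" | "j \<ge> 2" "m \<ge> 2" using \<open>j \<ge> 1\<close> \<open>m \<ge> 1\<close> by linarith
  then show ?thesis
  proof cases
    case 1
    then have "t * (q ^ a - 1) = q\<^sup>2 + q + 1"
      using ty unfolding t_def y_def by (auto simp: algebra_simps)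
    then have "q = 2 \<and> a = 3 \<and> t = 1"
      using mult_pred_prime_power_eq_cyclotomic3 assms(1,3) \<open>t \<ge> 1\<close> by blast
    with 1 show ?thesis using assms(5) unfolding t_def by auto
  next
    case 2
    then have "(j - 2) * (m - 2) \<ge> 0" by simp
    then have "t * (2 * y - 1) \<le> q\<^sup>2 + 2 * q + 4"
      using ty unfolding t_def by (simp add: algebra_simps)
    moreover have "1 * (2 * y - 1) \<le> t * (2 * y - 1)"
      using \<open>t \<ge> 1\<close> \<open>y > 0\<close> by (intro mult_right_mono) auto
    ultimately have bound: "2 * y \<le> q\<^sup>2 + 2 * q + 5" by simp
    have "q = 2"
    proof (rule ccontr)
      assume "q \<noteq> 2"
      with assms(1,2) have "q \<ge> 4" by simp
      then have "4 * q \<le> q\<^sup>2" unfolding power2_eq_square by (intro mult_right_mono) auto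
      with bound \<open>q\<^sup>2 \<le> y\<close> \<open>q \<ge> 4\<close> show False by linarith
    qed
    with bound have "(2::int) ^ a < 2 ^ 3" unfolding y_def by simp
    then have "a = 2" using assms(3) power_strict_increasing_iff[of "2::int" a 3] by simp
    with \<open>q = 2\<close> have "y = 4" unfolding y_def by simp
    with \<open>t * (2 * y - 1) \<le> _\<close> \<open>q = 2\<close> \<open>t \<ge> 1\<close> have "t = 1" by simp
    with ty \<open>y = 4\<close> \<open>q = 2\<close> 2 show ?thesis unfolding t_def by simp
  qed
qed

lemma add_two_less_two_power:
  fixes a :: nat
  assumes "a \<ge> 3"
  shows "a + 2 < 2 ^ a"
  using assms by (induction a rule: dec_induct) auto

lemma prime_even_eq_two:
  fixes q :: int
  assumes "prime q" "even q"
  shows "q = 2"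
  using assms primes_dvd_imp_eq[of 2 q] by simp

section \<open>The divisibility conditions q^a | 1 + p^3 and p | 1 + q^3 + ... + q^(3a)\<close>

text \<open>Otherwise the geometric sum is a + 1 modulo p, too small for p \<ge> q^a - 1.\<close>
lemma not_dvd_cube_pred:
  fixes p q m :: int and a :: nat
  assumes "prime p" "p \<noteq> 2" "q \<ge> 2" "a \<ge> 1" "p + 1 = m * q ^ a"
    and "p dvd (\<Sum>i\<le>a. (q ^ 3) ^ i)"
  shows "\<not> p dvd q ^ 3 - 1"
proof
  assume dvd: "p dvd q ^ 3 - 1"
  then have "[(\<Sum>i\<le>a. (q ^ 3) ^ i) = int a + 1] (mod p)"
    by (intro geometric_sum_cong) (simp add: cong_iff_dvd_diff)
  with assms(6) have "p dvd int a + 1" by (simp add: cong_dvd_iff)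
  then have pa: "p \<le> int a + 1" by (simp add: zdvd_imp_le)
  have "p \<ge> 3" using assms(1,2) prime_ge_2_int[of p] by linarith
  then have "q ^ a \<le> p + 1" using assms(5) by (simp add: zdvd_imp_le)
  moreover have "2 ^ a \<le> q ^ a" using assms(3) by (simp add: power_mono)
  ultimately have "2 ^ a \<le> int (a + 2)" using pa by simp
  have "a \<le> 2"
  proof (rule ccontr)
    assume "\<not> a \<le> 2"
    then have "int (a + 2) < int (2 ^ a)" using add_two_less_two_power[of a] by (simp only: of_nat_less_iff)
    with \<open>2 ^ a \<le> int (a + 2)\<close> show False by simp
  qed
  with assms(4) have "a = 1 \<or> a = 2" by auto
  then show False
  proof
    assume "a = 2"
    with pa \<open>p \<ge> 3\<close> \<open>q ^ a \<le> p + 1\<close> have "p = 3" "q\<^sup>2 \<le> 4" by simp_all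
    then have "q = 2" using assms(3) power2_le_imp_le[of q 2] by simp
    with dvd \<open>p = 3\<close> show False by simp
  qed (use pa \<open>p \<ge> 3\<close> in simp)
qed

lemma succ_eq_two_power_of_dvd_pred:
  fixes p q m :: int and a :: nat
  assumes "prime p" "prime q" "p \<noteq> 2" "a \<ge> 1" "p + 1 = m * q ^ a"
    and "p dvd q ^ (a + 1) - 1"
  shows "q = 2 \<and> p + 1 = 2 ^ (a + 1)"
proof -
  have "q \<ge> 2" "p \<ge> 2" using assms(1,2) prime_ge_2_int by auto
  have "odd p" using assms(1,3) \<open>p \<ge> 2\<close> prime_odd_int by simp
  have "q \<le> q ^ a" using \<open>q \<ge> 2\<close> assms(4) by (simp add: self_le_power)
  have "m * q ^ a > 0" using assms(5) \<open>p \<ge> 2\<close> by linarith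
  then have "m \<ge> 1" using \<open>q \<ge> 2\<close> by (simp add: zero_less_mult_iff)
  have "m * (q ^ (a + 1) - 1) = q * (m * q ^ a) - m" by (simp add: algebra_simps)
  also have "\<dots> = q * p + (q - m)" by (simp add: assms(5)[symmetric] algebra_simps)
  finally have "m * (q ^ (a + 1) - 1) = q * p + (q - m)" .
  then have "p dvd q - m" using assms(6) by (metis dvd_add_right_iff dvd_mult dvd_triv_right)
  have "m = q"
  proof (rule ccontr)
    assume "m \<noteq> q"
    moreover have "m = q \<or> m * (q ^ a + 1) \<le> q + 1"
      using eq_or_le_of_dvd_diff[OF assms(5) \<open>p dvd q - m\<close>] \<open>p \<ge> 2\<close> \<open>q \<ge> 2\<close> \<open>q \<le> q ^ a\<close>
      by linarith
    ultimately have le: "m * (q ^ a + 1) \<le> q + 1" by simp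
    moreover have "q ^ a + 1 \<le> m * (q ^ a + 1)"
      using mult_right_mono[of 1 m "q ^ a + 1"] \<open>m \<ge> 1\<close> \<open>q \<ge> 2\<close> by simp
    ultimately have "q ^ a = q" using \<open>q \<le> q ^ a\<close> by linarith
    with le have "m * (q + 1) \<le> 1 * (q + 1)" by simp
    then have "m = 1" using \<open>m \<ge> 1\<close> \<open>q \<ge> 2\<close> mult_right_le_imp_le[of m "q + 1" 1] by simp
    with assms(5) \<open>q ^ a = q\<close> have "p + 1 = q" by simp
    with \<open>odd p\<close> have "q = 2" using assms(2) prime_even_eq_two by auto
    with \<open>p + 1 = q\<close> \<open>p \<ge> 2\<close> show False by simp
  qed
  with assms(5) have "p + 1 = q ^ (a + 1)" by simp
  with \<open>odd p\<close> have "even (q ^ (a + 1))" by (metis even_plus_one_iff)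
  then have "q = 2" using prime_even_eq_two[OF assms(2)] by auto
  with \<open>p + 1 = q ^ (a + 1)\<close> show ?thesis by simp
qed

lemma succ_eq_two_power_of_dvd_cyclotomic3:
  fixes p q m :: int and a :: nat
  assumes "prime p" "prime q" "q \<noteq> 3" "a \<ge> 1" "p + 1 = m * q ^ a"
    and "\<not> p dvd q ^ 3 - 1" "p dvd (q ^ (a + 1))\<^sup>2 + q ^ (a + 1) + 1"
  shows "q = 2 \<and> p + 1 = 2 ^ (a + 1)"
proof (cases "a = 1")
  case True
  have "q ^ 3 - 1 = (q - 1) * (q\<^sup>2 + q + 1)"
    by (simp add: algebra_simps power2_eq_square power3_eq_cube)
  with assms(6) have "\<not> p dvd q\<^sup>2 + q + 1" by (metis dvd_mult)
  moreover have "(q ^ (a + 1))\<^sup>2 + q ^ (a + 1) + 1 = (q\<^sup>2 + q + 1) * (q\<^sup>2 - q + 1)"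
    using True by (simp add: algebra_simps power2_eq_square power4_eq_xxxx)
  ultimately have "p dvd q\<^sup>2 - q + 1" using assms(1,7) by (metis prime_dvd_mult_iff)
  moreover have "p = m * q - 1" using assms(5) True by simp
  ultimately have "q = 2 \<and> p = 3"
    using prime_mult_pred_dvd_cyclotomic6 assms(1,2) prime_ge_2_int by blast
  with True show ?thesis by simp
next
  case False
  have "p > 0" "q \<ge> 2" using assms(1,2) prime_gt_0_int prime_ge_2_int by auto
  with False assms have "q = 2 \<and> a = 3 \<and> (p = 7 \<or> p = 39)"
    using prime_power_cofactor_dvd_cyclotomic3[of q a p m] by simp
  moreover have "\<not> prime (39::int)"
    using primes_dvd_imp_eq[of 3 39] by simp
  ultimately show ?thesis using assms(1,6) by auto
qed

lemma not_dvd_geometric_sum_cubes_three: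
  fixes p :: int and a :: nat
  assumes "prime p" "p \<noteq> 2" "p \<noteq> 3" "a \<ge> 1" "3 ^ a dvd 1 + p ^ 3"
  shows "\<not> p dvd (\<Sum>i\<le>a. (3 ^ 3) ^ i)"
proof
  assume "p dvd (\<Sum>i\<le>a. (3 ^ 3) ^ i)"
  have "p \<ge> 3" "odd p" using assms(1,2) prime_ge_2_int[of p] prime_odd_int[of p] by auto
  obtain b where a: "a = Suc b" using assms(4) by (cases a) auto
  have "3 dvd 1 + p ^ 3" using assms(4,5) by (metis dvd_power dvd_trans gr0I not_one_le_zero)
  then have "3 dvd 1 + p" by (simp add: three_dvd_cube_succ_iff)
  then have "p mod 3 = 2" by presburger
  then have "\<not> p dvd (3 ^ (a + 1))\<^sup>2 + 3 ^ (a + 1) + 1"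
    using not_dvd_cyclotomic3_of_mod3_eq2 assms(1) by blast
  then have "p dvd 3 ^ (a + 1) - 1"
    using prime_dvd_geometric_sum_cubes assms(1) \<open>p dvd _\<close> by blast
  obtain m where m: "p + 1 = m * 3 ^ b"
    using three_power_dvd_succ_of_dvd_cube_succ assms(5) a by (metis dvdE mult.commute)
  have "m * (3 ^ (a + 1) - 1) = 9 * p + (9 - m)" using m by (simp add: a algebra_simps)
  then have "p dvd 9 - m" using \<open>p dvd 3 ^ (a + 1) - 1\<close> by (metis dvd_add_right_iff dvd_mult dvd_triv_right)
  have "even (m * 3 ^ b)" using m \<open>odd p\<close> by (metis even_plus_one_iff)
  then have "even m" by simp
  have "m * 3 ^ b > 0" using m \<open>p \<ge> 3\<close> by linarith
  with \<open>even m\<close> have "m \<ge> 2" by (simp add: zero_less_mult_iff) presburger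
  have "m = 9 \<or> m * (3 ^ b + 1) \<le> 10"
    using eq_or_le_of_dvd_diff[OF m \<open>p dvd 9 - m\<close>] \<open>p \<ge> 3\<close> by simp
  with \<open>even m\<close> have le: "m * (3 ^ b + 1) \<le> 10" by auto
  moreover have "2 * (3 ^ b + 1) \<le> m * (3 ^ b + 1)"
    using \<open>m \<ge> 2\<close> by (intro mult_right_mono) auto
  ultimately have "3 ^ b < (3::int) ^ 2" by simp
  then have "b = 0 \<or> b = 1" using power_strict_increasing_iff[of "3::int" b 2] by auto
  then show False
  proof
    assume "b = 0"
    with m le have "p \<le> 4" by simp
    with \<open>odd p\<close> \<open>p \<ge> 3\<close> assms(3) show False by presburger
  next
    assume "b = 1"
    with le \<open>m \<ge> 2\<close> have "m = 2" by simp
    with m \<open>b = 1\<close> have "p = 5" by simp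
    with \<open>p dvd 9 - m\<close> \<open>m = 2\<close> show False by simp
  qed
qed

lemma prime_power_dvd_nine:
  fixes q :: int and a :: nat
  assumes "prime q" "a \<ge> 1" "q ^ a dvd 9"
  shows "q = 3 \<and> a \<le> 2"
proof -
  have "q dvd q ^ a" using assms(2) by (simp add: dvd_power)
  with assms(3) have "q dvd 3 * 3" by (simp add: dvd_trans)
  then have "q dvd 3" using assms(1) prime_dvd_mult_iff by blast
  then have "q = 3" using assms(1) primes_dvd_imp_eq[of q 3] by simp
  moreover have "a \<le> 2"
  proof (rule ccontr)
    assume "\<not> a \<le> 2"
    then have "(3::int) ^ 3 dvd 3 ^ a" by (intro le_imp_power_dvd) simp
    with assms(3) \<open>q = 3\<close> have "(3::int) ^ 3 dvd 9" by (metis dvd_trans)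
    then show False by simp
  qed
  ultimately show ?thesis ..
qed

lemma dvd_cube_succ_and_geometric_sum_cases:
  fixes p q :: int and a :: nat
  assumes "prime p" "prime q" "p \<noteq> q" "a \<ge> 1" "q mod 3 \<noteq> 1"
    and "q ^ a dvd 1 + p ^ 3" "p dvd (\<Sum>i\<le>a. (q ^ 3) ^ i)"
  shows "(q = 2 \<and> p + 1 = 2 ^ (a + 1) \<and> p \<noteq> 7) \<or> (p = 2 \<and> q = 3 \<and> a = 1)"
proof -
  have "q \<ge> 2" using assms(2) prime_ge_2_int by simp
  have "q mod 3 \<noteq> 0 \<or> q = 3" using assms(2) primes_dvd_imp_eq[of 3 q] by auto
  with assms(5) have "q = 3 \<or> q mod 3 = 2" by presburger
  then consider "p = 2" | "p \<noteq> 2" "q = 3" | "p \<noteq> 2" "q mod 3 = 2" by blast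
  then show ?thesis
  proof cases
    case 1
    with assms(2,4,6) have "q = 3 \<and> a \<le> 2" using prime_power_dvd_nine by simp
    moreover have "a \<noteq> 2" using assms(7) 1 \<open>q = 3 \<and> a \<le> 2\<close> by (auto simp: eval_nat_numeral)
    ultimately show ?thesis using 1 assms(4) by auto
  next
    case 2
    then show ?thesis using not_dvd_geometric_sum_cubes_three assms by simp
  next
    case 3
    then have "q \<noteq> 3" by auto
    obtain m where m: "p + 1 = m * q ^ a"
      using prime_power_dvd_succ_of_dvd_cube_succ[OF assms(2) \<open>q mod 3 = 2\<close> assms(6)]
      by (metis dvdE mult.commute)
    have not_dvd: "\<not> p dvd q ^ 3 - 1"
      using not_dvd_cube_pred[OF assms(1) \<open>p \<noteq> 2\<close> \<open>q \<ge> 2\<close> assms(4) m assms(7)] .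
    have "q = 2 \<and> p + 1 = 2 ^ (a + 1)"
      using prime_dvd_geometric_sum_cubes[OF assms(1,7)]
        succ_eq_two_power_of_dvd_pred[OF assms(1,2) \<open>p \<noteq> 2\<close> assms(4) m]
        succ_eq_two_power_of_dvd_cyclotomic3[OF assms(1,2) \<open>q \<noteq> 3\<close> assms(4) m not_dvd]
      by blast
    moreover have "p \<noteq> 7" using not_dvd calculation by auto
    ultimately show ?thesis by simp
  qed
qed

section \<open>Divisor sums of p q^a\<close>

lemma divisors_prime_mult_prime_power:
  fixes p q a :: nat
  assumes "prime p" "prime q" "p \<noteq> q"
  shows "{d. d dvd p * q ^ a \<and> d > 0} = power q ` {..a} \<union> (\<lambda>i. p * q ^ i) ` {..a}"
proof (intro equalityI subsetI)
  fix d assume "d \<in> {d. d dvd p * q ^ a \<and> d > 0}"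
  then have d: "d dvd p * q ^ a" by simp
  show "d \<in> power q ` {..a} \<union> (\<lambda>i. p * q ^ i) ` {..a}"
  proof (cases "p dvd d")
    case True
    then obtain e where e: "d = p * e" by (elim dvdE)
    with d assms(1) have "e dvd q ^ a" by (simp add: prime_gt_0_nat)
    with e show ?thesis using divides_primepow_nat[OF assms(2)] by auto
  next
    case False
    then have "coprime p d" using assms(1) by (simp add: prime_imp_coprime)
    with d have "d dvd q ^ a" by (metis coprime_commute coprime_dvd_mult_right_iff)
    then show ?thesis using divides_primepow_nat[OF assms(2)] by auto
  qed
next
  fix d assume "d \<in> power q ` {..a} \<union> (\<lambda>i. p * q ^ i) ` {..a}"
  then show "d \<in> {d. d dvd p * q ^ a \<and> d > 0}"
    using assms by (auto simp: prime_gt_0_nat le_imp_power_dvd mult_dvd_mono)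
qed

lemma sum_divisor_powers_prime_mult_prime_power:
  fixes p q a k :: nat
  assumes "prime p" "prime q" "p \<noteq> q"
  shows "(\<Sum>d | d dvd p * q ^ a \<and> d > 0. d ^ k) = (1 + p ^ k) * (\<Sum>i\<le>a. (q ^ k) ^ i)"
proof -
  have "q > 1" using assms(2) prime_gt_1_nat by simp
  then have inj: "inj_on (power q) {..a}" "inj_on (\<lambda>i. p * q ^ i) {..a}"
    using assms(1) by (auto simp: inj_on_def prime_gt_0_nat)
  have "power q ` {..a} \<inter> (\<lambda>i. p * q ^ i) ` {..a} = {}"
  proof -
    have "\<not> p dvd q ^ i" for i using assms prime_dvd_power primes_dvd_imp_eq by blast
    then show ?thesis by (auto simp: dvd_def)
  qed
  then have "(\<Sum>d | d dvd p * q ^ a \<and> d > 0. d ^ k)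
      = (\<Sum>d\<in>power q ` {..a}. d ^ k) + (\<Sum>d\<in>(\<lambda>i. p * q ^ i) ` {..a}. d ^ k)"
    by (simp add: divisors_prime_mult_prime_power[OF assms] sum.union_disjoint)
  also have "\<dots> = (\<Sum>i\<le>a. (q ^ i) ^ k) + (\<Sum>i\<le>a. (p * q ^ i) ^ k)"
    by (simp add: sum.reindex inj)
  also have "\<dots> = (1 + p ^ k) * (\<Sum>i\<le>a. (q ^ k) ^ i)"
    by (simp add: power_mult_distrib sum_distrib_left sum.distrib algebra_simps flip: power_mult)
  finally show ?thesis .
qed

lemma perfect_two_power_mult_mersenne:
  fixes k :: nat
  assumes "prime (2 ^ (k + 1) - 1 :: nat)"
  shows "perfect (2 ^ k * (2 ^ (k + 1) - 1))"
proof -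
  define M :: nat where "M = 2 ^ (k + 1) - 1"
  have succ: "1 + M = 2 * 2 ^ k" unfolding M_def by simp
  then have "even (1 + M)" by simp
  then have "M \<noteq> 2" by auto
  have "prime M" using assms by (simp add: M_def)
  have "(\<Sum>d | d dvd M * 2 ^ k \<and> d > 0. d) = (\<Sum>d | d dvd M * 2 ^ k \<and> d > 0. d ^ 1)" by simp
  also have "\<dots> = (1 + M) * (\<Sum>i\<le>k. 2 ^ i)"
    using sum_divisor_powers_prime_mult_prime_power[where p = M and q = 2 and a = k and k = 1]
      \<open>prime M\<close> \<open>M \<noteq> 2\<close> by simp
  also have "(\<Sum>i\<le>k. 2 ^ i) = M"
    using sum_power2[of "k + 1"] by (simp add: M_def atLeast0LessThan lessThan_Suc_atMost)
  also have "(1 + M) * M = 2 * (M * 2 ^ k)" unfolding succ by (simp add: ac_simps)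
  finally have "(\<Sum>d | d dvd M * 2 ^ k \<and> d > 0. d) = 2 * (M * 2 ^ k)" .
  moreover have "M > 0" using \<open>prime M\<close> prime_gt_0_nat by simp
  ultimately show ?thesis unfolding perfect_def M_def[symmetric] by (simp add: mult.commute)
qed

lemma two_power_mult_mersenne_eq_28_iff:
  fixes k :: nat
  shows "2 ^ k * (2 ^ (k + 1) - 1) = (28 :: nat) \<longleftrightarrow> k = 2"
proof
  assume eq: "2 ^ k * (2 ^ (k + 1) - 1) = (28 :: nat)"
  show "k = 2"
  proof (rule ccontr)
    assume "k \<noteq> 2"
    then consider "k \<le> 1" | "k \<ge> 3" by linarith
    then show False
    proof cases
      case 1
      then have "2 ^ k * (2 ^ (k + 1) - 1) \<le> (2::nat) ^ 1 * (2 ^ 2 - 1)"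
        by (intro mult_mono diff_le_mono power_increasing) auto
      with eq show False by simp
    next
      case 2
      then have "(2::nat) ^ 3 * (2 ^ 4 - 1) \<le> 2 ^ k * (2 ^ (k + 1) - 1)"
        by (intro mult_mono diff_le_mono power_increasing) auto
      with eq show False by simp
    qed
  qed
qed simp

lemma prime_mult_prime_power_dvd_sigma3_iff:
  fixes p q a :: nat
  assumes "prime p" "prime q" "p \<noteq> q"
  shows "p * q ^ a dvd sigma3 (p * q ^ a) \<longleftrightarrow> q ^ a dvd 1 + p ^ 3 \<and> p dvd (\<Sum>i\<le>a. (q ^ 3) ^ i)"
proof -
  define S where "S = (\<Sum>i\<le>a. (q ^ 3) ^ i)"
  have sigma3: "sigma3 (p * q ^ a) = (1 + p ^ 3) * S"
    unfolding sigma3_def S_def by (rule sum_divisor_powers_prime_mult_prime_power[OF assms])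
  have "coprime p (q ^ a)" using assms primes_coprime by auto
  have "\<not> p dvd 1 + p ^ 3"
  proof
    assume "p dvd 1 + p ^ 3"
    then have "p dvd 1" using dvd_add_left_iff[of p "p ^ 3" 1] by simp
    with assms(1) show False by simp
  qed
  then have "coprime p (1 + p ^ 3)" using assms(1) by (simp add: prime_imp_coprime)
  have "\<not> q dvd S"
  proof -
    have "S = (\<Sum>i<a. (q ^ 3) ^ Suc i) + 1" unfolding S_def by (simp add: sum.atMost_shift)
    moreover have "q dvd (\<Sum>i<a. (q ^ 3) ^ Suc i)" by (intro dvd_sum) simp
    ultimately have "q dvd S \<longleftrightarrow> q dvd 1" by (metis dvd_add_right_iff)
    with assms(2) show ?thesis using prime_gt_1_nat[of q] by simp
  qed
  then have "coprime (q ^ a) S" using prime_imp_coprime[OF assms(2)] by simp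
  have "p * q ^ a dvd (1 + p ^ 3) * S \<longleftrightarrow> p dvd (1 + p ^ 3) * S \<and> q ^ a dvd (1 + p ^ 3) * S"
    using \<open>coprime p (q ^ a)\<close> by (auto intro: divides_mult dvd_mult_left dvd_mult_right)
  also have "\<dots> \<longleftrightarrow> p dvd S \<and> q ^ a dvd 1 + p ^ 3"
    using coprime_dvd_mult_right_iff[OF \<open>coprime p (1 + p ^ 3)\<close>]
      coprime_dvd_mult_left_iff[OF \<open>coprime (q ^ a) S\<close>] by blast
  finally show ?thesis unfolding sigma3 S_def by blast
qed

lemma prime_mult_prime_power_dvd_sigma3_imp_even_perfect:
  fixes p q a :: nat
  assumes "prime p" "prime q" "p \<noteq> q" "a \<ge> 1" "q mod 3 \<noteq> 1"
    and "p * q ^ a dvd sigma3 (p * q ^ a)"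
  obtains k where "k \<ge> 1" "k \<noteq> 2" "prime (2 ^ (k + 1) - 1 :: nat)"
    and "p * q ^ a = 2 ^ k * (2 ^ (k + 1) - 1)"
proof -
  have "q ^ a dvd 1 + p ^ 3" "p dvd (\<Sum>i\<le>a. (q ^ 3) ^ i)"
    using assms(6) prime_mult_prime_power_dvd_sigma3_iff[OF assms(1-3)] by simp_all
  then have "int (q ^ a) dvd int (1 + p ^ 3)" "int p dvd int (\<Sum>i\<le>a. (q ^ 3) ^ i)"
    by (simp_all only: int_dvd_int_iff)
  then have "int q ^ a dvd 1 + int p ^ 3" "int p dvd (\<Sum>i\<le>a. (int q ^ 3) ^ i)"
    by simp_all
  moreover have "int q mod 3 \<noteq> 1" using assms(5) by presburger
  ultimately have "(int q = 2 \<and> int p + 1 = 2 ^ (a + 1) \<and> int p \<noteq> 7) \<or> (int p = 2 \<and> int q = 3 \<and> a = 1)"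
    using dvd_cube_succ_and_geometric_sum_cases[of "int p" "int q" a] assms(1-4) by simp
  moreover have "int p + 1 = 2 ^ (a + 1) \<longleftrightarrow> p + 1 = 2 ^ (a + 1)"
    by (metis of_nat_1 of_nat_add of_nat_eq_iff of_nat_numeral of_nat_power)
  ultimately have "(q = 2 \<and> p + 1 = 2 ^ (a + 1) \<and> p \<noteq> 7) \<or> (p = 2 \<and> q = 3 \<and> a = 1)"
    by simp
  then show ?thesis
  proof
    assume "q = 2 \<and> p + 1 = 2 ^ (a + 1) \<and> p \<noteq> 7"
    then have "q = 2" "p = 2 ^ (a + 1) - 1" "a \<noteq> 2" by auto
    with assms(1,4) show ?thesis by (intro that[of a]) simp_all
  next
    assume "p = 2 \<and> q = 3 \<and> a = 1"
    then show ?thesis by (intro that[of 1]) simp_all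
  qed
qed

theorem theorem1p7:
  fixes n p q \<alpha> :: nat
  assumes "\<alpha> \<ge> 1" and "prime p" and "prime q" and "p \<noteq> q"
    and "q mod 3 \<noteq> 1"
    and "n = p * q ^ \<alpha>"
    and "n dvd sigma3 n"
  shows "perfect n \<and> even n \<and> n \<noteq> 28"
proof -
  obtain k where k: "k \<ge> 1" "k \<noteq> 2" "prime (2 ^ (k + 1) - 1 :: nat)"
    and n: "n = 2 ^ k * (2 ^ (k + 1) - 1)"
    using prime_mult_prime_power_dvd_sigma3_imp_even_perfect[OF assms(2-4,1,5)] assms(6,7) by metis
  have "perfect n" unfolding n using k(3) by (rule perfect_two_power_mult_mersenne)
  moreover have "even n" unfolding n using k(1) by simp
  moreover have "n \<noteq> 28" unfolding n using k(2) two_power_mult_mersenne_eq_28_iff by simp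
  ultimately show ?thesis by simp
qed

end
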